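(* Let $\Lambda$ be a $\mathbb Z$-lattice with an automorphism $M_h$ of finite order. Let $\Lambda^{(1)},\dots,\Lambda^{(k)}\subset\Lambda$ be Orlik blocks with cyclic generators $e^{(1)},\dots,e^{(k)}$ such that $\Lambda^{(1)}+\dots+\Lambda^{(k)}=\Lambda^{(1)}\oplus\dots\oplus\Lambda^{(k)}$, and let $g$ be an automorphism of $\Lambda^{(1)}\oplus\dots\oplus\Lambda^{(k)}$ commuting with $M_h$. Then there are unique polynomials $p_{ij}\in\mathbb Z[t]$ of degree $<\mathrm{rank}\,\Lambda^{(i)}$ with $g(e^{(j)})=\sum_{i=1}^kp_{ij}(M_h)(e^{(i)})$. Suppose moreover that $p_0\in\mathbb Z[t]$ divides $\gcd(p_{\Lambda^{(1)}},\dots,p_{\Lambda^{(k)}})$ and that $g=\mathrm{id}$ on $\Lambda^{(j)}_{p_{\Lambda^{(j)}}/p_0}$ for every $j$. Then $p_{ij}=\delta_{ij}+\frac{p_{\Lambda^{(i)}}}{p_0}q_{ij}$ for suitable $q_{ij}\in\mathbb Z[t]$ of degree $<\deg p_0$. If furthermore $\xi$ is a root of unity with $p_0(\xi)=0$, then with respect to the eigenvectors $v(e^{(j)},\xi)\in\Lambda^{(j)}_\xi$, $$g(v(e^{(j)},\xi))=\sum_{i=1}^k\Bigl(\delta_{ij}+\frac{p_{\Lambda^{(j)}}}{p_0}q_{ij}\Bigr)(\xi)\cdot v(e^{(i)},\xi).$$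
   Context: An Orlik block is a nonzero primitive $M_h$-invariant sublattice $\Lambda^{(1)}\subset\Lambda$ with a cyclic generator $e^{(1)}$, i.e. $\Lambda^{(1)}=\bigoplus_{j=0}^{\deg p_{\Lambda^{(1)}}-1}\mathbb ZM_h^j(e^{(1)})$, where $p_{\Lambda^{(1)}}$ is the characteristic polynomial of $M_h$ on $\Lambda^{(1)}$. For an $M_h$-invariant sublattice $B$ and a product $p$ of cyclotomic polynomials dividing $p_B$, $B_p:=(\bigoplus_{\lambda:p(\lambda)=0}B_\lambda)\cap B$, where $B_\lambda=\ker(M_h-\lambda)\subset B\otimes\mathbb C$. For an eigenvalue $\lambda$ of $M_h$ on an Orlik block with generator $e$, $v(e,\lambda):=\frac{p_{\Lambda^{(1)}}}{t-\lambda}(M_h)(e)$ (an eigenvector with eigenvalue $\lambda$). *)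

theory Defs
  imports "Jordan_Normal_Form.Char_Poly" "HOL-Library.Function_Algebras"
begin

text \<open>Ambient space: the lattice \<Lambda> is modelled as the standard lattice of
  integer points inside \<Lambda> \<otimes> \<complex> = ('i \<Rightarrow> complex), for a finite index type 'i.\<close>

definition lat :: "('i::finite \<Rightarrow> complex) set" where
  "lat = {v. \<forall>i. v i \<in> \<int>}"

definition smul :: "complex \<Rightarrow> ('i \<Rightarrow> complex) \<Rightarrow> ('i \<Rightarrow> complex)" where
  "smul c v = (\<lambda>i. c * v i)"

definition mv :: "('i::finite \<Rightarrow> 'i \<Rightarrow> complex) \<Rightarrow> ('i \<Rightarrow> complex) \<Rightarrow> ('i \<Rightarrow> complex)" where
  "mv A v = (\<lambda>i. \<Sum>j\<in>UNIV. A i j * v j)"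

definition papp :: "complex poly \<Rightarrow> ('i::finite \<Rightarrow> 'i \<Rightarrow> complex) \<Rightarrow> ('i \<Rightarrow> complex) \<Rightarrow> ('i \<Rightarrow> complex)" where
  "papp p A v = (\<Sum>i\<le>degree p. smul (coeff p i) ((mv A ^^ i) v))"

definition sublattice :: "('i::finite \<Rightarrow> complex) set \<Rightarrow> bool" where
  "sublattice B \<longleftrightarrow> B \<subseteq> lat \<and> 0 \<in> B \<and> (\<forall>x\<in>B. \<forall>y\<in>B. x + y \<in> B) \<and> (\<forall>x\<in>B. - x \<in> B)"

text \<open>primitive: \<Lambda>/B is torsion free\<close>
definition primitive :: "('i::finite \<Rightarrow> complex) set \<Rightarrow> bool" where
  "primitive B \<longleftrightarrow> (\<forall>x\<in>lat. \<forall>m::nat. 0 < m \<longrightarrow> smul (of_nat m) x \<in> B \<longrightarrow> x \<in> B)"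

definition invariant :: "('i::finite \<Rightarrow> 'i \<Rightarrow> complex) \<Rightarrow> ('i \<Rightarrow> complex) set \<Rightarrow> bool" where
  "invariant A B \<longleftrightarrow> mv A ` B \<subseteq> B"

definition zcomb :: "('i \<Rightarrow> complex) list \<Rightarrow> ('i \<Rightarrow> complex) set" where
  "zcomb bs = {(\<Sum>i<length bs. smul (of_int (c i)) (bs ! i)) | c :: nat \<Rightarrow> int. True}"

definition zindep :: "('i \<Rightarrow> complex) list \<Rightarrow> bool" where
  "zindep bs \<longleftrightarrow> (\<forall>c :: nat \<Rightarrow> int. (\<Sum>i<length bs. smul (of_int (c i)) (bs ! i)) = 0
      \<longrightarrow> (\<forall>i<length bs. c i = 0))"

definition zbasis :: "('i \<Rightarrow> complex) set \<Rightarrow> ('i \<Rightarrow> complex) list \<Rightarrow> bool" where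
  "zbasis B bs \<longleftrightarrow> zindep bs \<and> B = zcomb bs"

definition charpoly_on :: "('i::finite \<Rightarrow> 'i \<Rightarrow> complex) \<Rightarrow> ('i \<Rightarrow> complex) set \<Rightarrow> int poly \<Rightarrow> bool" where
  "charpoly_on A B p \<longleftrightarrow> (\<exists>bs C. zbasis B bs \<and> C \<in> carrier_mat (length bs) (length bs) \<and>
     (\<forall>j<length bs. mv A (bs ! j) = (\<Sum>i<length bs. smul (of_int (C $$ (i, j))) (bs ! i))) \<and>
     p = char_poly C)"

definition cyclic_generator :: "('i::finite \<Rightarrow> 'i \<Rightarrow> complex) \<Rightarrow> ('i \<Rightarrow> complex) set \<Rightarrow> ('i \<Rightarrow> complex) \<Rightarrow> nat \<Rightarrow> bool" where
  "cyclic_generator A B e d \<longleftrightarrow> e \<in> B \<and> zbasis B (map (\<lambda>j. (mv A ^^ j) e) [0..<d])"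

definition orlik_block :: "('i::finite \<Rightarrow> 'i \<Rightarrow> complex) \<Rightarrow> ('i \<Rightarrow> complex) set \<Rightarrow> ('i \<Rightarrow> complex) \<Rightarrow> int poly \<Rightarrow> bool" where
  "orlik_block A B e p \<longleftrightarrow> B \<noteq> {0} \<and> sublattice B \<and> primitive B \<and> invariant A B \<and>
     charpoly_on A B p \<and> cyclic_generator A B e (degree p)"

definition cspan :: "('i \<Rightarrow> complex) set \<Rightarrow> ('i \<Rightarrow> complex) set" where
  "cspan B = {(\<Sum>v\<in>F. smul (c v) v) | F c. finite F \<and> F \<subseteq> B}"

definition eigsp :: "('i::finite \<Rightarrow> 'i \<Rightarrow> complex) \<Rightarrow> ('i \<Rightarrow> complex) set \<Rightarrow> complex \<Rightarrow> ('i \<Rightarrow> complex) set" where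
  "eigsp A B l = {x \<in> cspan B. mv A x = smul l x}"

definition subl :: "('i::finite \<Rightarrow> 'i \<Rightarrow> complex) \<Rightarrow> ('i \<Rightarrow> complex) set \<Rightarrow> int poly \<Rightarrow> ('i \<Rightarrow> complex) set" where
  "subl A B p = {x. \<exists>F w. finite F \<and> F \<subseteq> {l. poly (map_poly of_int p) l = 0} \<and>
       (\<forall>l\<in>F. w l \<in> eigsp A B l) \<and> x = (\<Sum>l\<in>F. w l)} \<inter> B"

definition vvec :: "('i::finite \<Rightarrow> 'i \<Rightarrow> complex) \<Rightarrow> int poly \<Rightarrow> ('i \<Rightarrow> complex) \<Rightarrow> complex \<Rightarrow> ('i \<Rightarrow> complex)" where
  "vvec A p e l = papp (map_poly of_int p div [:- l, 1:]) A e"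

definition lsum :: "(nat \<Rightarrow> ('i \<Rightarrow> complex) set) \<Rightarrow> nat \<Rightarrow> ('i \<Rightarrow> complex) set" where
  "lsum L k = {(\<Sum>j<k. x j) | x. \<forall>j<k. x j \<in> L j}"

end

(*
  Write p_i for p_{Lambda^(i)}. Expanding g(e_j) in the cyclic Z-bases of the blocks gives the
  p_ij; they are unique because a polynomial of degree < deg p_B that kills a cyclic generator of
  B is zero. Since M_h has finite order it is diagonalisable, so p_0(M_h) e_j, being killed by
  p_j / p_0, lies in Lambda^(j)_{p_j / p_0} and is fixed by g. Comparing the coefficients of
  g(p_0(M_h) e_j) = p_0(M_h) e_j in the direct sum gives p_i | p_0 (p_ij - delta_ij), that is
  p_i / p_0 | p_ij - delta_ij. Finally v(e_i, xi) = (p_i / (t - xi))(M_h) e_i and p_i kills e_i;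
  modulo p_i one has (p_j / (t - xi)) p_ij = c (p_i / (t - xi)) with
  c = (delta_ij + (p_j / p_0) q_ij)(xi), because t - xi divides f - f(xi) for every f.
*)
theory Submission
  imports Defs
begin

interpretation cvec: vector_space "smul :: complex \<Rightarrow> ('i \<Rightarrow> complex) \<Rightarrow> _"
  by unfold_locales (auto simp: smul_def fun_eq_iff algebra_simps)

lemma cspan_eq_span: "cspan B = cvec.span B"
  unfolding cspan_def cvec.span_explicit by blast

lemma module_hom_mv: "module_hom smul smul (mv A)"
  unfolding module_hom_iff
  by (auto simp: cvec.module_axioms mv_def smul_def fun_eq_iff algebra_simps sum.distrib sum_distrib_left)

lemma module_hom_funpow: "module_hom s s f \<Longrightarrow> module_hom s s (f ^^ n)"
  by (induction n) (auto simp: module_hom_iff)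

lemmas mv_add = module_hom.add[OF module_hom_mv]
  and mv_smul = module_hom.scale[OF module_hom_mv]
  and mv_sum = module_hom.sum[OF module_hom_mv]
  and mv_zero [simp] = module_hom.zero[OF module_hom_mv]
  and mv_pow_add = module_hom.add[OF module_hom_funpow[OF module_hom_mv]]
  and mv_pow_smul = module_hom.scale[OF module_hom_funpow[OF module_hom_mv]]

lemma of_int_poly_const [simp]: "of_int_poly [:c:] = [:of_int c:]"
  by (simp add: poly_eq_iff coeff_map_poly coeff_pCons split: nat.split)

lemma linear_factor_dvd_diff_poly: "[:- a, 1:] dvd p - [:poly p a:]"
  for p :: "'a::comm_ring_1 poly"
  using poly_eq_0_iff_dvd[of "p - [:poly p a:]" a] by simp

lemma degree_cofactor_lt:
  fixes f :: "'a::idom poly"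
  assumes "f = r * q" and "degree f < degree (p * r)"
  shows "q = 0 \<or> degree q < degree p"
proof (cases "q = 0")
  case False
  have "p \<noteq> 0" "r \<noteq> 0"
    using assms(2) by auto
  then show ?thesis
    using assms False by (simp add: degree_mult_eq)
qed simp

lemma papp_eq_sum_lessThan:
  assumes "degree p < N"
  shows "papp p A v = (\<Sum>i<N. smul (coeff p i) ((mv A ^^ i) v))"
  unfolding papp_def
  by (rule sum.mono_neutral_left) (use assms in \<open>auto simp: coeff_eq_0\<close>)

lemma papp_pCons: "papp (pCons a p) A v = smul a v + mv A (papp p A v)"
proof -
  define N where "N = Suc (degree p)"
  have "papp (pCons a p) A v = (\<Sum>i<Suc N. smul (coeff (pCons a p) i) ((mv A ^^ i) v))"
    by (rule papp_eq_sum_lessThan) (auto simp: N_def degree_pCons_le le_imp_less_Suc)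
  also have "\<dots> = smul a v + (\<Sum>i<N. mv A (smul (coeff p i) ((mv A ^^ i) v)))"
    by (subst sum.lessThan_Suc_shift) (simp add: mv_smul)
  also have "(\<Sum>i<N. mv A (smul (coeff p i) ((mv A ^^ i) v))) = mv A (papp p A v)"
    by (simp only: mv_sum papp_eq_sum_lessThan[of p N] N_def lessI)
  finally show ?thesis .
qed

lemma papp_0 [simp]: "papp 0 A v = 0"
  unfolding papp_def by simp

lemma papp_const [simp]: "papp [:c:] A v = smul c v"
  using papp_pCons[of c 0 A v] by (simp only: papp_0 mv_zero add_0_right)

lemma papp_1 [simp]: "papp 1 A v = v"
  by (simp add: one_pCons)

lemma papp_linear_factor: "papp [:- a, 1:] A v = mv A v - smul a v"
  by (simp add: papp_pCons)

lemma papp_add: "papp (p + q) A v = papp p A v + papp q A v"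
proof (induction p q rule: poly_induct2)
  case (pCons a p b q)
  then show ?case
    by (simp only: add_pCons papp_pCons mv_add cvec.scale_left_distrib ac_simps)
qed simp

lemma papp_smult: "papp (Polynomial.smult c p) A v = smul c (papp p A v)"
proof (induction p)
  case 0
  show ?case by (simp only: smult_0_right papp_0 cvec.scale_zero_right)
next
  case (pCons a p)
  then show ?case
    by (simp only: smult_pCons papp_pCons mv_smul cvec.scale_right_distrib cvec.scale_scale)
qed

lemma papp_mult: "papp (p * q) A v = papp p A (papp q A v)"
proof (induction p)
  case 0
  show ?case by simp
next
  case (pCons a p)
  have "pCons a p * q = Polynomial.smult a q + pCons 0 (p * q)"
    by simp
  then show ?case
    using pCons by (simp only: papp_add papp_smult papp_pCons cvec.scale_zero_left add_0_left)
qed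

lemma module_hom_papp: "module_hom smul smul (papp p A)"
proof -
  have "papp p A (x + y) = papp p A x + papp p A y" "papp p A (smul c x) = smul c (papp p A x)" for x y c
    by (simp_all add: papp_def mv_pow_add mv_pow_smul cvec.scale_right_distrib
        cvec.scale_left_commute sum.distrib cvec.scale_sum_right mult.commute)
  then show ?thesis
    unfolding module_hom_iff by (simp add: cvec.module_axioms)
qed

lemmas papp_vec_smul = module_hom.scale[OF module_hom_papp]
  and papp_vec_sum = module_hom.sum[OF module_hom_papp]
  and papp_vec_zero [simp] = module_hom.zero[OF module_hom_papp]

lemma papp_diff: "papp (p - q) A v = papp p A v - papp q A v"
  using papp_add[of "p - q" q A v] by (simp add: algebra_simps)

lemma papp_sum: "papp (sum f S) A v = (\<Sum>s\<in>S. papp (f s) A v)"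
  by (induction S rule: infinite_finite_induct) (auto simp: papp_add)

lemma papp_monom: "papp (monom c n) A v = smul c ((mv A ^^ n) v)"
  by (induction n) (simp_all add: monom_0 monom_Suc papp_pCons mv_smul)

lemma papp_eigenvector:
  assumes "mv A v = smul l v"
  shows "papp p A v = smul (poly p l) v"
  by (induction p) (simp_all add: papp_pCons mv_smul assms cvec.scale_left_distrib mult.commute)

lemma papp_eq_if_dvd_diff:
  assumes "papp P A v = 0" and "P dvd p - q"
  shows "papp p A v = papp q A v"
proof -
  obtain T where "p - q = T * P" using assms(2) by (metis dvd_def mult.commute)
  then have "papp p A v - papp q A v = papp T A (papp P A v)"
    by (simp flip: papp_diff papp_mult)
  then show ?thesis using assms(1) by simp
qed

lemma invariant_funpow: "invariant A B \<Longrightarrow> x \<in> B \<Longrightarrow> (mv A ^^ n) x \<in> B"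
  by (induction n) (auto simp: invariant_def)

lemma papp_in_span:
  assumes "invariant A B" and "v \<in> B"
  shows "papp p A v \<in> cvec.span B"
  unfolding papp_def using assms by (intro cvec.span_sum cvec.span_scale cvec.span_base invariant_funpow)

lemma papp_commute:
  assumes "invariant A S" and commutes: "\<And>y. y \<in> S \<Longrightarrow> mv G (mv A y) = mv A (mv G y)"
    and "x \<in> S"
  shows "mv G (papp f A x) = papp f A (mv G x)"
proof -
  have "(mv A ^^ n) x \<in> S" for n
    using assms(1,3) by (rule invariant_funpow)
  then have "mv G ((mv A ^^ n) x) = (mv A ^^ n) (mv G x)" for n
    by (induction n) (simp_all add: commutes)
  then show ?thesis
    unfolding papp_def by (simp add: mv_sum mv_smul)
qed

lemma vvec_eq_papp:
  assumes "p0 dvd p" and "poly (of_int_poly p0) \<xi> = 0"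
  shows "vvec A p e \<xi> = papp ((of_int_poly p0 div [:- \<xi>, 1:]) * of_int_poly (p div p0)) A e"
proof -
  have "of_int_poly p = (of_int_poly p0 :: complex poly) * of_int_poly (p div p0)"
    using assms(1) by (simp flip: of_int_poly_hom.hom_mult)
  moreover have "[:- \<xi>, 1:] dvd (of_int_poly p0 :: complex poly)"
    using assms(2) by (simp flip: poly_eq_0_iff_dvd)
  ultimately show ?thesis
    unfolding vvec_def by (simp add: dvd_div_mult)
qed

subsection \<open>Cayley--Hamilton on a \<int>-basis\<close>

text \<open>Multiplying the relations \<open>\<Sum>\<^sub>i (tI - C)\<^sub>i\<^sub>j(A) b\<^sub>i = 0\<close> by the adjugate of
  \<open>tI - C\<close> gives \<open>det(tI - C)(A) b\<^sub>l = 0\<close>.\<close>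
lemma char_poly_annihilates_basis:
  fixes C :: "int mat"
  assumes C: "C \<in> carrier_mat n n" and "length bs = n"
    and act: "\<forall>j<n. mv A (bs ! j) = (\<Sum>i<n. smul (of_int (C $$ (i, j))) (bs ! i))"
    and l: "l < n"
  shows "papp (of_int_poly (char_poly C)) A (bs ! l) = 0"
proof -
  define X where "X = char_poly_matrix C"
  define Y where "Y = adj_mat X"
  have X: "X \<in> carrier_mat n n"
    unfolding X_def using C by simp
  have Y: "Y \<in> carrier_mat n n" and XY: "X * Y = det X \<cdot>\<^sub>m 1\<^sub>m n"
    using adj_mat[OF X] unfolding Y_def by auto
  have X_entry: "papp (of_int_poly (X $$ (i, j))) A (bs ! i)
      = (if i = j then mv A (bs ! i) else 0) - smul (of_int (C $$ (i, j))) (bs ! i)"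
    if "i < n" "j < n" for i j
  proof -
    have "X $$ (i, j) = (if i = j then [:0, 1:] else 0) - [:C $$ (i, j):]"
      using that C by (auto simp: X_def char_poly_matrix_def one_pCons)
    then show ?thesis
      by (simp add: papp_diff papp_pCons if_distrib[of "\<lambda>f. papp (of_int_poly f) A (bs ! i)"])
  qed
  have rows: "(\<Sum>i<n. papp (of_int_poly (X $$ (i, j))) A (bs ! i)) = 0" if j: "j < n" for j
  proof -
    have "(\<Sum>i<n. papp (of_int_poly (X $$ (i, j))) A (bs ! i))
        = (\<Sum>i<n. (if i = j then mv A (bs ! i) else 0)) - (\<Sum>i<n. smul (of_int (C $$ (i, j))) (bs ! i))"
      using j by (simp add: X_entry sum_subtractf)
    then show ?thesis
      using act j by simp
  qed
  have "0 = (\<Sum>j<n. papp (of_int_poly (Y $$ (j, l))) A (\<Sum>i<n. papp (of_int_poly (X $$ (i, j))) A (bs ! i)))"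
    by (simp add: rows)
  also have "\<dots> = (\<Sum>j<n. \<Sum>i<n. papp (of_int_poly (X $$ (i, j) * Y $$ (j, l))) A (bs ! i))"
    by (simp only: papp_vec_sum papp_mult[symmetric] of_int_poly_hom.hom_mult mult.commute)
  also have "\<dots> = (\<Sum>i<n. papp (of_int_poly (\<Sum>j<n. X $$ (i, j) * Y $$ (j, l))) A (bs ! i))"
    by (subst sum.swap) (simp only: of_int_poly_hom.hom_sum papp_sum)
  also have "\<dots> = (\<Sum>i<n. papp (of_int_poly ((X * Y) $$ (i, l))) A (bs ! i))"
    using X Y l by (intro sum.cong refl) (auto simp: scalar_prod_def lessThan_atLeast0 intro!: sum.cong)
  also have "\<dots> = (\<Sum>i<n. if i = l then papp (of_int_poly (det X)) A (bs ! i) else 0)"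
    using l by (intro sum.cong refl) (auto simp: XY)
  also have "\<dots> = papp (of_int_poly (det X)) A (bs ! l)"
    using l by simp
  finally show ?thesis
    unfolding X_def char_poly_def by simp
qed

lemma charpoly_on_annihilates:
  assumes "charpoly_on A B p" and "x \<in> B"
  shows "papp (of_int_poly p) A x = 0"
proof -
  obtain bs and C :: "int mat" where basis: "zbasis B bs"
    and C: "C \<in> carrier_mat (length bs) (length bs)"
    and act: "\<forall>j<length bs. mv A (bs ! j) = (\<Sum>i<length bs. smul (of_int (C $$ (i, j))) (bs ! i))"
    and p: "p = char_poly C"
    using assms(1) unfolding charpoly_on_def by blast
  obtain c where x: "x = (\<Sum>i<length bs. smul (of_int (c i)) (bs ! i))"
    using assms(2) basis unfolding zbasis_def zcomb_def by blast
  show ?thesis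
    unfolding x p by (simp add: papp_vec_sum papp_vec_smul char_poly_annihilates_basis[OF C refl act])
qed

lemma charpoly_on_monic: "charpoly_on A B p \<Longrightarrow> lead_coeff p = 1"
  unfolding charpoly_on_def by (auto dest: degree_monic_char_poly)

lemma sublattice_zero: "sublattice B \<Longrightarrow> 0 \<in> B"
  and sublattice_add: "sublattice B \<Longrightarrow> x \<in> B \<Longrightarrow> y \<in> B \<Longrightarrow> x + y \<in> B"
  and sublattice_uminus: "sublattice B \<Longrightarrow> x \<in> B \<Longrightarrow> - x \<in> B"
  unfolding sublattice_def by blast+

lemma sublattice_sum:
  assumes "sublattice B" and "\<And>s. s \<in> S \<Longrightarrow> f s \<in> B"
  shows "sum f S \<in> B"
  using assms(2)
  by (induction S rule: infinite_finite_induct) (auto intro: sublattice_zero[OF assms(1)] sublattice_add[OF assms(1)])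

lemma sublattice_int_smul:
  assumes "sublattice B" and "x \<in> B"
  shows "smul (of_int c) x \<in> B"
proof -
  have nat_smul: "smul (of_nat n) x \<in> B" for n
  proof (induction n)
    case 0
    show ?case
      by (simp only: of_nat_0 cvec.scale_zero_left sublattice_zero[OF assms(1)])
  next
    case (Suc n)
    have "smul (of_nat (Suc n)) x = x + smul (of_nat n) x"
      by (simp only: of_nat_Suc cvec.scale_left_distrib cvec.scale_one add.commute)
    then show ?case
      using Suc assms sublattice_add by metis
  qed
  show ?thesis
  proof (cases "c \<ge> 0")
    case True
    then show ?thesis
      using nat_smul[of "nat c"] by simp
  next
    case False
    then have "smul (of_int c) x = smul (- of_nat (nat (- c))) x"
      by simp
    then show ?thesis
      using nat_smul assms(1) sublattice_uminus cvec.scale_minus_left by metis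
  qed
qed

lemma sublattice_papp:
  assumes "sublattice B" and "invariant A B" and "x \<in> B"
  shows "papp (of_int_poly f) A x \<in> B"
  unfolding papp_def
proof (rule sublattice_sum[OF assms(1)])
  fix i
  show "smul (coeff (of_int_poly f) i) ((mv A ^^ i) x) \<in> B"
    unfolding coeff_map_poly[of of_int, OF of_int_0]
    using assms by (intro sublattice_int_smul invariant_funpow)
qed

subsection \<open>Cyclic generators and Orlik blocks\<close>

lemma zcomb_cyclic_basis_eq_papp:
  "(\<Sum>i<length (map (\<lambda>j. (mv A ^^ j) e) [0..<d]).
       smul (of_int (c i)) (map (\<lambda>j. (mv A ^^ j) e) [0..<d] ! i))
     = papp (of_int_poly (\<Sum>i<d. monom (c i) i)) A e"
  by (simp add: papp_sum papp_monom of_int_poly_hom.hom_sum)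

lemma cyclic_generator_poly_eq_0:
  assumes "cyclic_generator A B e d" and "degree f < d" and "papp (of_int_poly f) A e = 0"
  shows "f = 0"
proof -
  let ?bs = "map (\<lambda>j. (mv A ^^ j) e) [0..<d]"
  have f: "(\<Sum>i<d. monom (coeff f i) i) = f"
    using assms(2) poly_as_sum_of_monoms'[of f "d - 1"] by (simp add: lessThan_Suc_atMost[symmetric])
  have "(\<Sum>i<length ?bs. smul (of_int (coeff f i)) (?bs ! i)) = 0"
    by (simp only: zcomb_cyclic_basis_eq_papp f assms(3))
  moreover have "zindep ?bs"
    using assms(1) unfolding cyclic_generator_def zbasis_def by blast
  ultimately have "coeff f i = 0" if "i < d" for i
    using that unfolding zindep_def by simp
  then show ?thesis
    using assms(2) by (intro poly_eqI) (metis coeff_0 coeff_eq_0 le_less_trans not_less)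
qed

lemma cyclic_generator_poly_exists:
  assumes "cyclic_generator A B e d" and "0 < d" and "x \<in> B"
  obtains f where "degree f < d" and "x = papp (of_int_poly f) A e"
proof -
  let ?bs = "map (\<lambda>j. (mv A ^^ j) e) [0..<d]"
  obtain c where "x = (\<Sum>i<length ?bs. smul (of_int (c i)) (?bs ! i))"
    using assms(1,3) unfolding cyclic_generator_def zbasis_def zcomb_def by blast
  then have "x = papp (of_int_poly (\<Sum>i<d. monom (c i) i)) A e"
    by (simp only: zcomb_cyclic_basis_eq_papp)
  moreover have "degree (\<Sum>i<d. monom (c i) i) \<le> d - 1"
    by (intro degree_sum_le) (auto intro: order.trans[OF degree_monom_le])
  then have "degree (\<Sum>i<d. monom (c i) i) < d"
    using assms(2) by linarith
  ultimately show ?thesis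
    using that by blast
qed

lemma orlik_block_generator: "orlik_block A B e p \<Longrightarrow> e \<in> B"
  unfolding orlik_block_def cyclic_generator_def by blast

lemma orlik_block_degree_pos:
  assumes "orlik_block A B e p"
  shows "0 < degree p"
proof (rule ccontr)
  assume "\<not> 0 < degree p"
  then have "B = zcomb []"
    using assms unfolding orlik_block_def cyclic_generator_def zbasis_def by simp
  then show False
    using assms unfolding orlik_block_def zcomb_def by simp
qed

lemma orlik_block_monic: "orlik_block A B e p \<Longrightarrow> lead_coeff p = 1"
  unfolding orlik_block_def by (blast intro: charpoly_on_monic)

lemma orlik_block_annihilates: "orlik_block A B e p \<Longrightarrow> x \<in> B \<Longrightarrow> papp (of_int_poly p) A x = 0"
  unfolding orlik_block_def by (blast intro: charpoly_on_annihilates)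

lemma orlik_block_expansion:
  assumes "orlik_block A B e p" and "x \<in> B"
  obtains f where "degree f < degree p" and "x = papp (of_int_poly f) A e"
proof -
  have "cyclic_generator A B e (degree p)"
    using assms(1) unfolding orlik_block_def by blast
  from cyclic_generator_poly_exists[OF this orlik_block_degree_pos[OF assms(1)] assms(2)] that
  show ?thesis .
qed

lemma orlik_block_annihilator_iff:
  assumes block: "orlik_block A B e p"
  shows "papp (of_int_poly f) A e = 0 \<longleftrightarrow> p dvd f"
proof
  assume f: "papp (of_int_poly f) A e = 0"
  have "p \<noteq> 0"
    using orlik_block_monic[OF block] by auto
  then obtain a q where "a \<noteq> 0" and division: "Polynomial.smult a f = p * q + pseudo_mod f p"
    and remainder: "pseudo_mod f p = 0 \<or> degree (pseudo_mod f p) < degree p"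
    using pseudo_mod(1)[of p f] pseudo_mod(2)[of p f] by blast
  have "Polynomial.smult a f = [:a:] * f"
    by simp
  then have "papp (of_int_poly (p * q + pseudo_mod f p)) A e = 0"
    unfolding division[symmetric] by (simp only: of_int_poly_hom.hom_mult papp_mult f papp_vec_zero)
  moreover have "papp (of_int_poly (p * q)) A e = 0"
    by (simp add: of_int_poly_hom.hom_mult mult.commute[of _ "of_int_poly q"] papp_mult
        orlik_block_annihilates[OF block orlik_block_generator[OF block]])
  ultimately have "papp (of_int_poly (pseudo_mod f p)) A e = 0"
    by (simp add: of_int_poly_hom.hom_add papp_add)
  moreover have "cyclic_generator A B e (degree p)"
    using block unfolding orlik_block_def by blast
  ultimately have "pseudo_mod f p = 0"
    using remainder cyclic_generator_poly_eq_0 by blast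
  then have "p dvd Polynomial.smult a f"
    using division by simp
  then show "p dvd f"
    using \<open>a \<noteq> 0\<close> by (rule dvd_monic[OF orlik_block_monic[OF block]])
next
  assume "p dvd f"
  then obtain q where "f = q * p"
    by (metis dvd_def mult.commute)
  then show "papp (of_int_poly f) A e = 0"
    by (simp add: of_int_poly_hom.hom_mult papp_mult
        orlik_block_annihilates[OF block orlik_block_generator[OF block]])
qed

subsection \<open>Eigenspace decomposition of a periodic matrix\<close>

definition lagrange_basis :: "complex set \<Rightarrow> complex \<Rightarrow> complex poly" where
  "lagrange_basis S l = Polynomial.smult (1 / (\<Prod>l'\<in>S - {l}. l - l')) (\<Prod>l'\<in>S - {l}. [:- l', 1:])"

lemma poly_lagrange_basis:
  assumes "finite S" and "l \<in> S" and "z \<in> S"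
  shows "poly (lagrange_basis S l) z = (if z = l then 1 else 0)"
proof (cases "z = l")
  case True
  have "(\<Prod>l'\<in>S - {l}. l - l') \<noteq> 0"
    using assms(1) by simp
  then show ?thesis
    using True by (simp add: lagrange_basis_def poly_prod)
next
  case False
  then have "(\<Prod>l'\<in>S - {l}. z - l') = 0"
    using assms by (simp add: prod_zero_iff)
  then show ?thesis
    using False by (simp add: lagrange_basis_def poly_prod)
qed

lemma degree_lagrange_basis:
  assumes "finite S" and "l \<in> S"
  shows "degree (lagrange_basis S l) < card S"
proof -
  have "degree (lagrange_basis S l) \<le> degree (\<Prod>l'\<in>S - {l}. [:- l', 1:])"
    unfolding lagrange_basis_def by (rule degree_smult_le)
  also have "\<dots> \<le> card (S - {l})"
    using degree_prod_sum_le[of "S - {l}" "\<lambda>l'. [:- l', 1:]"] assms(1) by simp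
  also have "\<dots> < card S"
    using assms by (rule card_Diff1_less)
  finally show ?thesis .
qed

lemma sum_lagrange_basis:
  assumes "finite S" and "S \<noteq> {}"
  shows "(\<Sum>l\<in>S. lagrange_basis S l) = 1"
proof (rule poly_eqI_degree[of S])
  show "poly (\<Sum>l\<in>S. lagrange_basis S l) z = poly 1 z" if "z \<in> S" for z
    using assms(1) that by (simp add: poly_sum poly_lagrange_basis)
  have "degree (\<Sum>l\<in>S. lagrange_basis S l) \<le> card S - 1"
    using assms(1) degree_lagrange_basis[OF assms(1)] by (intro degree_sum_le) fastforce+
  moreover have "0 < card S"
    using assms by (simp add: card_gt_0_iff)
  ultimately show "degree (\<Sum>l\<in>S. lagrange_basis S l) < card S" and "degree (1 :: complex poly) < card S"
    by simp_all
qed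

lemma linear_factor_mult_lagrange_basis:
  assumes "finite S" and "l \<in> S"
  shows "[:- l, 1:] * lagrange_basis S l
    = Polynomial.smult (1 / (\<Prod>l'\<in>S - {l}. l - l')) (\<Prod>l'\<in>S. [:- l', 1:])"
  using prod.remove[OF assms, of "\<lambda>l'. [:- l', 1:]"] by (simp add: lagrange_basis_def mult_smult_right)

lemma eigen_decomposition:
  assumes "finite S" and annihilated: "papp (\<Prod>l\<in>S. [:- l, 1:]) A x = 0"
  shows "x = (\<Sum>l\<in>S. papp (lagrange_basis S l) A x)"
    and "l \<in> S \<Longrightarrow> mv A (papp (lagrange_basis S l) A x) = smul l (papp (lagrange_basis S l) A x)"
proof -
  show "x = (\<Sum>l\<in>S. papp (lagrange_basis S l) A x)"
  proof (cases "S = {}")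
    case True
    then show ?thesis
      using annihilated by simp
  next
    case False
    then show ?thesis
      using assms(1) by (simp add: sum_lagrange_basis papp_sum[symmetric])
  qed
  assume "l \<in> S"
  have "mv A (papp (lagrange_basis S l) A x) - smul l (papp (lagrange_basis S l) A x)
      = papp ([:- l, 1:] * lagrange_basis S l) A x"
    by (simp only: papp_mult papp_linear_factor)
  also have "\<dots> = 0"
    by (simp only: linear_factor_mult_lagrange_basis[OF assms(1) \<open>l \<in> S\<close>] papp_smult annihilated
        cvec.scale_zero_right)
  finally show "mv A (papp (lagrange_basis S l) A x) = smul l (papp (lagrange_basis S l) A x)"
    by simp
qed

lemma prod_roots_of_unity:
  assumes "0 < m"
  shows "(\<Prod>z | z ^ m = 1. [:- z, 1:]) = (monom 1 m - 1 :: complex poly)"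
proof -
  define P where "P = (monom 1 m - 1 :: complex poly)"
  have coeff_P: "coeff P n = (if n = m then 1 else if n = 0 then -1 else 0)" for n
    using assms unfolding P_def by (auto simp: coeff_1)
  have "degree P = m"
    by (rule antisym, rule degree_le) (auto simp: coeff_P intro: le_degree)
  then have "lead_coeff P = 1"
    by (simp add: coeff_P)
  have poly_P: "poly P z = z ^ m - 1" for z
    unfolding P_def by (simp add: poly_monom)
  have "rsquarefree P"
    unfolding rsquarefree_roots
  proof (intro allI notI)
    fix a assume "poly P a = 0 \<and> poly (pderiv P) a = 0"
    then have "a ^ m = 1" and "of_nat m * a ^ (m - 1) = 0"
      by (auto simp: poly_P P_def pderiv_diff pderiv_monom poly_monom)
    then show False
      using assms by (metis one_neq_zero power_0_left mult_eq_0_iff of_nat_eq_0_iff neq0_conv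
          power_eq_0_iff)
  qed
  from complex_poly_decompose_rsquarefree[OF this] have "(\<Prod>z | poly P z = 0. [:- z, 1:]) = P"
    using \<open>lead_coeff P = 1\<close> by simp
  moreover have "{z. poly P z = 0} = {z. z ^ m = 1}"
    by (simp add: poly_P)
  ultimately show ?thesis
    by (simp add: P_def)
qed

lemma mem_subl_if_annihilated:
  assumes "invariant A B" and "x \<in> B" and "0 < m" and "(mv A ^^ m) = id"
    and annihilated: "papp (of_int_poly r) A x = 0"
  shows "x \<in> subl A B r"
proof -
  define S where "S = {z :: complex. z ^ m = 1}"
  define w where "w l = papp (lagrange_basis S l) A x" for l
  define F where "F = {l \<in> S. poly (of_int_poly r) l = 0}"
  have "finite S"
    unfolding S_def using assms(3) by (simp add: finite_roots_unity)
  have "papp (\<Prod>l\<in>S. [:- l, 1:]) A x = 0"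
    unfolding S_def prod_roots_of_unity[OF assms(3)] using assms(4) by (simp add: papp_diff papp_monom)
  note decomposition = eigen_decomposition[OF \<open>finite S\<close> this, folded w_def]
  have eigen: "mv A (w l) = smul l (w l)" if "l \<in> S" for l
    using decomposition(2) that .
  \<comment> \<open>r(A) kills x, hence each component w l, on which it acts as the scalar r(l)\<close>
  have vanish: "w l = 0" if "l \<in> S - F" for l
  proof -
    have "smul (poly (of_int_poly r) l) (w l) = papp (of_int_poly r) A (w l)"
      using papp_eigenvector[OF eigen] that by simp
    also have "\<dots> = 0"
      unfolding w_def by (simp add: papp_mult[symmetric] mult.commute[of "of_int_poly r"] papp_mult annihilated)
    finally show ?thesis
      using that unfolding F_def by simp
  qed
  have "x = (\<Sum>l\<in>F. w l)"
    unfolding decomposition(1) using \<open>finite S\<close> vanish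
    by (intro sum.mono_neutral_right) (auto simp: F_def)
  moreover have "w l \<in> eigsp A B l" if "l \<in> F" for l
    using eigen[of l] that papp_in_span[OF assms(1,2)]
    unfolding eigsp_def cspan_eq_span w_def F_def by simp
  moreover have "finite F"
    using \<open>finite S\<close> unfolding F_def by simp
  ultimately show ?thesis
    unfolding subl_def F_def using assms(2) by blast
qed

subsection \<open>Direct sums of Orlik blocks\<close>

locale orlik_decomposition =
  fixes A :: "'i::finite \<Rightarrow> 'i \<Rightarrow> complex" and k :: nat
    and L :: "nat \<Rightarrow> ('i \<Rightarrow> complex) set" and e :: "nat \<Rightarrow> 'i \<Rightarrow> complex"
    and pL :: "nat \<Rightarrow> int poly"
  assumes orlik_blocks: "\<And>j. j < k \<Longrightarrow> orlik_block A (L j) (e j) (pL j)"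
    and direct_sum: "\<And>x. \<forall>j<k. x j \<in> L j \<Longrightarrow> (\<Sum>j<k. x j) = 0 \<Longrightarrow> \<forall>j<k. x j = 0"
begin

lemma block_subset_lsum:
  assumes "j < k" and "x \<in> L j"
  shows "x \<in> lsum L k"
proof -
  have "\<forall>i<k. (if i = j then x else 0) \<in> L i"
    using assms orlik_blocks unfolding orlik_block_def by (auto intro: sublattice_zero)
  moreover have "x = (\<Sum>i<k. if i = j then x else 0)"
    using assms(1) by simp
  ultimately show ?thesis
    unfolding lsum_def by blast
qed

lemma generator_mem: "j < k \<Longrightarrow> e j \<in> L j"
  using orlik_block_generator orlik_blocks by blast

lemma generator_mem_lsum: "j < k \<Longrightarrow> e j \<in> lsum L k"
  using block_subset_lsum generator_mem by blast

lemma lsum_invariant: "invariant A (lsum L k)"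
  unfolding invariant_def
proof clarify
  fix x assume "x \<in> lsum L k"
  then obtain y where y: "\<forall>j<k. y j \<in> L j" and x: "x = (\<Sum>j<k. y j)"
    unfolding lsum_def by blast
  have "\<forall>j<k. mv A (y j) \<in> L j"
    using y orlik_blocks unfolding orlik_block_def invariant_def by blast
  then show "mv A x \<in> lsum L k"
    unfolding lsum_def x mv_sum by blast
qed

lemma lsum_expansion:
  assumes "x \<in> lsum L k"
  shows "\<exists>P. (\<forall>i<k. degree (P i) < degree (pL i)) \<and> x = (\<Sum>i<k. papp (of_int_poly (P i)) A (e i))"
proof -
  obtain y where y: "\<forall>i<k. y i \<in> L i" and x: "x = (\<Sum>i<k. y i)"
    using assms unfolding lsum_def by blast
  have "\<forall>i\<in>{..<k}. \<exists>f. degree f < degree (pL i) \<and> y i = papp (of_int_poly f) A (e i)"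
    using orlik_block_expansion orlik_blocks y by (metis lessThan_iff)
  from bchoice[OF this] obtain P
    where "\<forall>i\<in>{..<k}. degree (P i) < degree (pL i) \<and> y i = papp (of_int_poly (P i)) A (e i)"
    by blast
  then show ?thesis
    unfolding x by (intro exI[of _ P]) auto
qed

lemma dvd_if_sum_papp_eq_0:
  assumes "(\<Sum>i<k. papp (of_int_poly (f i)) A (e i)) = 0" and "i < k"
  shows "pL i dvd f i"
proof -
  have "papp (of_int_poly (f j)) A (e j) \<in> L j" if "j < k" for j
    using orlik_blocks[OF that] generator_mem[OF that]
    unfolding orlik_block_def by (blast intro: sublattice_papp)
  then have "papp (of_int_poly (f i)) A (e i) = 0"
    using direct_sum[OF _ assms(1)] assms(2) by simp
  then show ?thesis
    using orlik_block_annihilator_iff[OF orlik_blocks[OF assms(2)]] by blast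
qed

lemma expansion_unique:
  assumes "\<forall>i<k. degree (f i) < degree (pL i)" and "\<forall>i<k. degree (g i) < degree (pL i)"
    and "(\<Sum>i<k. papp (of_int_poly (f i)) A (e i)) = (\<Sum>i<k. papp (of_int_poly (g i)) A (e i))"
    and "i < k"
  shows "f i = g i"
proof (rule ccontr)
  assume "f i \<noteq> g i"
  have "(\<Sum>i<k. papp (of_int_poly (f i - g i)) A (e i)) = 0"
    using assms(3) by (simp add: of_int_poly_hom.hom_minus papp_diff sum_subtractf)
  then have "pL i dvd f i - g i"
    using assms(4) by (rule dvd_if_sum_papp_eq_0)
  then have "degree (pL i) \<le> degree (f i - g i)"
    using \<open>f i \<noteq> g i\<close> by (simp add: dvd_imp_degree_le)
  moreover have "degree (f i - g i) < degree (pL i)"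
    using assms(1,2,4) degree_diff_le_max[of "f i" "g i"] by fastforce
  ultimately show False
    by simp
qed

end

locale orlik_endomorphism = orlik_decomposition +
  fixes G :: "'i::finite \<Rightarrow> 'i \<Rightarrow> complex"
  assumes maps_lsum: "mv G ` lsum L k \<subseteq> lsum L k"
    and commutes: "\<And>x. x \<in> lsum L k \<Longrightarrow> mv G (mv A x) = mv A (mv G x)"
begin

definition coord_poly :: "nat \<Rightarrow> nat \<Rightarrow> int poly" where
  "coord_poly i j = (SOME P. (\<forall>i<k. degree (P i) < degree (pL i)) \<and>
     mv G (e j) = (\<Sum>i<k. papp (of_int_poly (P i)) A (e i))) i"

lemma coord_poly:
  assumes "j < k"
  shows "\<forall>i<k. degree (coord_poly i j) < degree (pL i)"
    and "mv G (e j) = (\<Sum>i<k. papp (of_int_poly (coord_poly i j)) A (e i))"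
proof -
  have "mv G (e j) \<in> lsum L k"
    using maps_lsum generator_mem_lsum[OF assms] by blast
  from someI_ex[OF lsum_expansion[OF this]]
  show "\<forall>i<k. degree (coord_poly i j) < degree (pL i)"
    and "mv G (e j) = (\<Sum>i<k. papp (of_int_poly (coord_poly i j)) A (e i))"
    unfolding coord_poly_def by blast+
qed

lemma coord_poly_unique:
  assumes "(\<forall>i<k. \<forall>j<k. degree (p i j) < degree (pL i)) \<and>
    (\<forall>j<k. mv G (e j) = (\<Sum>i<k. papp (of_int_poly (p i j)) A (e i)))"
  shows "\<forall>i<k. \<forall>j<k. p i j = coord_poly i j"
  using assms coord_poly by (auto intro: expansion_unique[where f = "\<lambda>i. p i _" and g = "\<lambda>i. coord_poly i _"])

lemma G_papp: "x \<in> lsum L k \<Longrightarrow> mv G (papp f A x) = papp f A (mv G x)"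
  using papp_commute[OF lsum_invariant commutes] .

lemma G_papp_generator:
  assumes "j < k"
  shows "mv G (papp f A (e j)) = (\<Sum>i<k. papp (f * of_int_poly (coord_poly i j)) A (e i))"
proof -
  have "mv G (papp f A (e j)) = papp f A (mv G (e j))"
    by (rule G_papp[OF generator_mem_lsum[OF assms]])
  then show ?thesis
    by (simp only: coord_poly(2)[OF assms] papp_vec_sum papp_mult)
qed

lemma coord_poly_congruence:
  assumes "0 < m" and "(mv A ^^ m) = id" and "i < k" and "j < k"
    and "p0 dvd pL i" and "p0 dvd pL j" and G_fixes: "\<forall>x\<in>subl A (L j) (pL j div p0). mv G x = x"
  shows "pL i div p0 dvd coord_poly i j - (if i = j then 1 else 0)"
proof -
  define x where "x = papp (of_int_poly p0) A (e j)"
  have block: "orlik_block A (L j) (e j) (pL j)"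
    using orlik_blocks[OF assms(4)] .
  then have "x \<in> L j"
    using generator_mem[OF assms(4)] unfolding x_def orlik_block_def by (blast intro: sublattice_papp)
  moreover have "papp (of_int_poly (pL j div p0)) A x = 0"
    using orlik_block_annihilates[OF block generator_mem[OF assms(4)]] assms(6)
    by (simp add: x_def papp_mult[symmetric] of_int_poly_hom.hom_mult[symmetric] mult.commute)
  ultimately have "x \<in> subl A (L j) (pL j div p0)"
    using block assms(1,2) unfolding orlik_block_def by (blast intro: mem_subl_if_annihilated)
  then have "mv G x = x"
    using G_fixes by blast
  moreover have "x = (\<Sum>i<k. papp (of_int_poly p0 * of_int_poly (if i = j then 1 else 0)) A (e i))"
    using assms(4)
    by (simp add: x_def if_distrib[of "\<lambda>f. papp (of_int_poly p0 * of_int_poly f) A _"] cong: if_cong)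
  ultimately have "(\<Sum>i<k. papp (of_int_poly (p0 * (coord_poly i j - (if i = j then 1 else 0)))) A (e i)) = 0"
    using G_papp_generator[OF assms(4), of "of_int_poly p0"] unfolding x_def
    by (simp add: of_int_poly_hom.hom_mult of_int_poly_hom.hom_minus right_diff_distrib papp_diff sum_subtractf)
  from dvd_if_sum_papp_eq_0[OF this assms(3)]
  have "p0 * (pL i div p0) dvd p0 * (coord_poly i j - (if i = j then 1 else 0))"
    using assms(5) by simp
  moreover have "p0 \<noteq> 0"
    using assms(5) orlik_block_monic[OF orlik_blocks[OF assms(3)]] by auto
  ultimately show ?thesis
    by simp
qed

lemma G_eigenvector:
  assumes "j < k" and "\<forall>i<k. p0 dvd pL i" and "poly (of_int_poly p0) \<xi> = 0"
    and coord: "\<forall>i<k. coord_poly i j = (if i = j then 1 else 0) + (pL i div p0) * q i"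
  shows "mv G (vvec A (pL j) (e j) \<xi>) =
    (\<Sum>i<k. smul (poly (of_int_poly ((if i = j then 1 else 0) + (pL j div p0) * q i)) \<xi>)
                 (vvec A (pL i) (e i) \<xi>))"
proof -
  define U where "U = of_int_poly p0 div [:- \<xi>, 1:]"
  define R where "R i = (of_int_poly (pL i div p0) :: complex poly)" for i
  have vvec: "vvec A (pL i) (e i) \<xi> = papp (U * R i) A (e i)" if "i < k" for i
    unfolding U_def R_def using vvec_eq_papp assms(2,3) that by blast
  have "mv G (vvec A (pL j) (e j) \<xi>) = (\<Sum>i<k. papp (U * R j * of_int_poly (coord_poly i j)) A (e i))"
    using vvec[OF assms(1)] G_papp_generator[OF assms(1)] by simp
  also have "\<dots> = (\<Sum>i<k. smul (poly (of_int_poly ((if i = j then 1 else 0) + (pL j div p0) * q i)) \<xi>)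
                 (vvec A (pL i) (e i) \<xi>))"
  proof (rule sum.cong[OF refl])
    fix i assume "i \<in> {..<k}"
    then have "i < k" by simp
    define Q where "Q = (of_int_poly (q i) :: complex poly)"
    define c where "c = poly (of_int_poly ((if i = j then 1 else 0) + (pL j div p0) * q i)) \<xi>"
    have c: "c = (if i = j then 1 else 0) + poly (R j * Q) \<xi>"
      unfolding c_def R_def Q_def by (simp add: of_int_poly_hom.hom_add of_int_poly_hom.hom_mult)
    have difference: "U * R j * of_int_poly (coord_poly i j) - Polynomial.smult c (U * R i)
        = U * R i * (R j * Q - [:poly (R j * Q) \<xi>:])"
      using coord \<open>i < k\<close> unfolding c Q_def R_def
      by (cases "i = j") (simp_all add: of_int_poly_hom.hom_add of_int_poly_hom.hom_mult algebra_simps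
          smult_add_left)
    have "of_int_poly (pL i) = (of_int_poly p0 :: complex poly) * R i"
      unfolding R_def using assms(2) \<open>i < k\<close> by (simp flip: of_int_poly_hom.hom_mult)
    also have "[:- \<xi>, 1:] dvd (of_int_poly p0 :: complex poly)"
      using assms(3) by (simp add: poly_eq_0_iff_dvd)
    then have "of_int_poly p0 = U * [:- \<xi>, 1:]"
      unfolding U_def by (rule dvd_div_mult_self[symmetric])
    finally have "of_int_poly (pL i) = U * R i * [:- \<xi>, 1:]"
      by (simp only: ac_simps)
    then have "of_int_poly (pL i) dvd U * R j * of_int_poly (coord_poly i j) - Polynomial.smult c (U * R i)"
      unfolding difference by (simp only: mult_dvd_mono[OF dvd_refl linear_factor_dvd_diff_poly])
    then have "papp (U * R j * of_int_poly (coord_poly i j)) A (e i) = papp (Polynomial.smult c (U * R i)) A (e i)"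
      using papp_eq_if_dvd_diff orlik_block_annihilates[OF orlik_blocks[OF \<open>i < k\<close>]]
        generator_mem[OF \<open>i < k\<close>] by blast
    then show "papp (U * R j * of_int_poly (coord_poly i j)) A (e i) = smul c (vvec A (pL i) (e i) \<xi>)"
      by (simp add: papp_smult vvec[OF \<open>i < k\<close>])
  qed
  finally show ?thesis .
qed

lemma coord_poly_decomposition:
  assumes "0 < m" and "(mv A ^^ m) = id"
    and p0: "(\<forall>j<k. p0 dvd pL j) \<and> (\<forall>j<k. \<forall>x\<in>subl A (L j) (pL j div p0). mv G x = x)"
  shows "\<exists>q. (\<forall>i<k. \<forall>j<k. (q i j = 0 \<or> degree (q i j) < degree p0) \<and>
              coord_poly i j = (if i = j then 1 else 0) + (pL i div p0) * q i j) \<and>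
            (\<forall>\<xi>. poly (of_int_poly p0) \<xi> = 0 \<longrightarrow>
              (\<forall>j<k. mv G (vvec A (pL j) (e j) \<xi>) =
                 (\<Sum>i<k. smul (poly (of_int_poly ((if i = j then 1 else 0) + (pL j div p0) * q i j)) \<xi>)
                          (vvec A (pL i) (e i) \<xi>))))"
proof -
  define q where "q i j = (coord_poly i j - (if i = j then 1 else 0)) div (pL i div p0)" for i j
  have coord: "coord_poly i j = (if i = j then 1 else 0) + (pL i div p0) * q i j" if "i < k" "j < k" for i j
    using coord_poly_congruence[OF assms(1,2) that] p0 that unfolding q_def by simp
  have "q i j = 0 \<or> degree (q i j) < degree p0" if "i < k" "j < k" for i j
  proof (rule degree_cofactor_lt)
    show "coord_poly i j - (if i = j then 1 else 0) = (pL i div p0) * q i j"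
      using coord[OF that] by simp
    have "degree (coord_poly i j - (if i = j then 1 else 0)) < degree (pL i)"
      using coord_poly(1)[OF \<open>j < k\<close>] orlik_block_degree_pos[OF orlik_blocks[OF \<open>i < k\<close>]] \<open>i < k\<close>
        degree_diff_le_max[of "coord_poly i j" "if i = j then 1 else 0"] by auto
    then show "degree (coord_poly i j - (if i = j then 1 else 0)) < degree (p0 * (pL i div p0))"
      using p0 \<open>i < k\<close> by simp
  qed
  then show ?thesis
    using coord p0 by (intro exI[of _ q] conjI allI impI G_eigenvector) auto
qed

end

theorem lemma2p7:
  fixes Mh :: "'i::finite \<Rightarrow> 'i \<Rightarrow> complex"
    and k :: nat
    and L :: "nat \<Rightarrow> ('i \<Rightarrow> complex) set"
    and e :: "nat \<Rightarrow> ('i \<Rightarrow> complex)"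
    and pL :: "nat \<Rightarrow> int poly"
    and G :: "'i \<Rightarrow> 'i \<Rightarrow> complex"
  assumes aut: "mv Mh ` lat = lat"
    and fin_order: "\<exists>m>0. (mv Mh ^^ m) = id"
    and blocks: "\<forall>j<k. orlik_block Mh (L j) (e j) (pL j)"
    and direct: "\<forall>x. (\<forall>j<k. x j \<in> L j) \<and> (\<Sum>j<k. x j) = 0 \<longrightarrow> (\<forall>j<k. x j = 0)"
    and g_aut: "bij_betw (mv G) (lsum L k) (lsum L k)"
    and g_comm: "\<forall>x\<in>lsum L k. mv G (mv Mh x) = mv Mh (mv G x)"
  shows "\<exists>p :: nat \<Rightarrow> nat \<Rightarrow> int poly.
     (\<forall>i<k. \<forall>j<k. degree (p i j) < degree (pL i)) \<and>
     (\<forall>j<k. mv G (e j) = (\<Sum>i<k. papp (map_poly of_int (p i j)) Mh (e i))) \<and>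
     (\<forall>p' :: nat \<Rightarrow> nat \<Rightarrow> int poly.
        (\<forall>i<k. \<forall>j<k. degree (p' i j) < degree (pL i)) \<and>
        (\<forall>j<k. mv G (e j) = (\<Sum>i<k. papp (map_poly of_int (p' i j)) Mh (e i)))
        \<longrightarrow> (\<forall>i<k. \<forall>j<k. p' i j = p i j)) \<and>
     (\<forall>p0 :: int poly.
        (\<forall>j<k. p0 dvd pL j) \<and> (\<forall>j<k. \<forall>x\<in>subl Mh (L j) (pL j div p0). mv G x = x)
        \<longrightarrow> (\<exists>q :: nat \<Rightarrow> nat \<Rightarrow> int poly.
              (\<forall>i<k. \<forall>j<k. (q i j = 0 \<or> degree (q i j) < degree p0) \<and>
                  p i j = (if i = j then 1 else 0) + (pL i div p0) * q i j) \<and>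
              (\<forall>\<xi> :: complex. (\<exists>n>0. \<xi> ^ n = 1) \<and> poly (map_poly of_int p0) \<xi> = 0 \<longrightarrow>
                 (\<forall>j<k. mv G (vvec Mh (pL j) (e j) \<xi>) =
                    (\<Sum>i<k. smul (poly (map_poly of_int ((if i = j then 1 else 0) + (pL j div p0) * q i j)) \<xi>)
                                 (vvec Mh (pL i) (e i) \<xi>))))))"
proof -
  interpret orlik_endomorphism Mh k L e pL G
  proof
    show "orlik_block Mh (L j) (e j) (pL j)" if "j < k" for j
      using blocks that by blast
    show "\<forall>j<k. x j = 0" if "\<forall>j<k. x j \<in> L j" and "(\<Sum>j<k. x j) = 0" for x
      using direct that by blast
    show "mv G ` lsum L k \<subseteq> lsum L k"
      using g_aut by (simp add: bij_betw_def)
    show "mv G (mv Mh x) = mv Mh (mv G x)" if "x \<in> lsum L k" for x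
      using g_comm that by blast
  qed
  obtain m where m: "0 < m" "(mv Mh ^^ m) = id"
    using fin_order by blast
  show ?thesis (is "\<exists>p. ?degree p \<and> ?expansion p \<and> ?unique p \<and> (\<forall>p0. ?fixed p0 \<longrightarrow> ?split p p0)")
  proof (rule exI[of _ coord_poly], intro conjI)
    show "?degree coord_poly" and "?expansion coord_poly"
      using coord_poly by blast+
    show "?unique coord_poly"
      using coord_poly_unique by blast
    show "\<forall>p0. ?fixed p0 \<longrightarrow> ?split coord_poly p0"
    proof (intro allI impI)
      fix p0 assume "?fixed p0"
      from coord_poly_decomposition[OF m this] show "?split coord_poly p0"
        by blast
    qed
  qed
qed

end
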